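(* Let $\pi$ be a permutation with exactly one descent that avoids both $456123$ and $356124$. Then for all permutations $\alpha\le\beta$ in the interval $[1,\pi]$ with $|\beta|-|\alpha|\ge3$, the open interval $(\alpha,\beta)$ is connected; i.e. $[1,\pi]$ has no disconnected subintervals of rank $3$ or more.
   Context: A permutation of length $n$ is an arrangement of $1,\dots,n$; $1$ denotes the permutation of length one. The permutation poset is ordered by pattern containment: $\sigma\le\pi$ if $\pi$ has a subsequence in the same relative order as $\sigma$; $\pi$ avoids $\tau$ if $\tau\not\le\pi$. A descent is an index $i$ with $\pi_i>\pi_{i+1}$. The interval $[\alpha,\beta]=\{\tau:\alpha\le\tau\le\beta\}$ has rank $|\beta|-|\alpha|$; it is disconnected if the open interval $(\alpha,\beta)=[\alpha,\beta]\setminus\{\alpha,\beta\}$ is disconnected as a poset, i.e. its comparability graph (equivalently its order complex) is disconnected. *)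

theory Defs
  imports Main
begin

definition is_perm :: "nat list \<Rightarrow> bool" where
  "is_perm xs \<longleftrightarrow> distinct xs \<and> set xs = {1..length xs}"

definition order_iso :: "nat list \<Rightarrow> nat list \<Rightarrow> bool" where
  "order_iso xs ys \<longleftrightarrow> length xs = length ys \<and>
     (\<forall>i<length xs. \<forall>j<length xs. xs ! i < xs ! j \<longleftrightarrow> ys ! i < ys ! j)"

definition contains :: "nat list \<Rightarrow> nat list \<Rightarrow> bool" (infix "\<preceq>" 50) where
  "sigma \<preceq> pi \<longleftrightarrow> (\<exists>I. I \<subseteq> {..<length pi} \<and> order_iso sigma (nths pi I))"

definition avoids :: "nat list \<Rightarrow> nat list \<Rightarrow> bool" where
  "avoids pi tau \<longleftrightarrow> \<not> (tau \<preceq> pi)"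

text \<open>Descents, with 0-based indices.\<close>
definition descents :: "nat list \<Rightarrow> nat set" where
  "descents pi = {i. Suc i < length pi \<and> pi ! i > pi ! Suc i}"

definition perm_interval :: "nat list \<Rightarrow> nat list \<Rightarrow> nat list set" where
  "perm_interval a b = {t. is_perm t \<and> a \<preceq> t \<and> t \<preceq> b}"

definition open_interval :: "nat list \<Rightarrow> nat list \<Rightarrow> nat list set" where
  "open_interval a b = perm_interval a b - {a, b}"

definition comparability :: "nat list set \<Rightarrow> (nat list \<times> nat list) set" where
  "comparability S = {(x, y). x \<in> S \<and> y \<in> S \<and> (x \<preceq> y \<or> y \<preceq> x)}"

definition poset_connected :: "nat list set \<Rightarrow> bool" where
  "poset_connected S \<longleftrightarrow> (\<forall>x\<in>S. \<forall>y\<in>S. (x, y) \<in> (comparability S)\<^sup>*)"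

end

theory Submission
  imports Defs
begin

text \<open>
  Let \<open>a \<le> b \<le> \<pi>\<close> with \<open>|b| \<ge> |a| + 3\<close>.  Two gaps of one occurrence give coatoms with a
  common lower bound in \<open>(a, b)\<close> (delete both, possible as the rank is at least 3).  Hence
  the interval is connected once any gap of any occurrence is joined to any gap of any other
  occurrence by a chain of such "gap-related" pairs (\<open>connected_if_all_linked\<close>).

  Being a pattern of \<open>\<pi>\<close>, \<open>b\<close> has at most one descent, i.e. it is the union of two
  increasing runs.  If \<open>a\<close> has a descent, every occurrence distributes \<open>a\<close> over the runs in
  the same way, and two occurrences are joined by exchanging entries one at a time.  If
  \<open>a\<close> is increasing, occurrences are the increasing sets of \<open>|a|\<close> positions, whose
  complements are governed by the "cuts" of \<open>b\<close>; a counting argument over the values of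
  \<open>b\<close> links any two such cuts unless \<open>b\<close> contains \<open>456123\<close> or \<open>356124\<close>.
\<close>
section \<open>Occurrences of patterns as order-preserving index maps\<close>

lemma nths_as_map: "nths xs A = map (nth xs) (filter (\<lambda>i. i \<in> A) [0..<length xs])"
proof (induction xs rule: rev_induct)
  case Nil show ?case by simp
next
  case (snoc x xs)
  have "map (nth (xs @ [x])) (filter (\<lambda>i. i \<in> A) [0..<length xs])
      = map (nth xs) (filter (\<lambda>i. i \<in> A) [0..<length xs])"
    by (rule map_cong) (auto simp: nth_append)
  then show ?case using snoc by (simp add: nths_append)
qed

definition embedding :: "nat list \<Rightarrow> nat list \<Rightarrow> (nat \<Rightarrow> nat) \<Rightarrow> bool" where
  "embedding a b g \<longleftrightarrow> (\<forall>i<length a. g i < length b)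
     \<and> (\<forall>i j. i < j \<longrightarrow> j < length a \<longrightarrow> g i < g j)
     \<and> (\<forall>i<length a. \<forall>j<length a. a!i < a!j \<longleftrightarrow> b!(g i) < b!(g j))"

lemma filter_mem_image_upt:
  assumes "\<forall>i<m. g i < n" "\<forall>i j. i < j \<longrightarrow> j < m \<longrightarrow> g i < g j"
  shows "filter (\<lambda>i. i \<in> g`{..<m}) [0..<n] = map g [0..<m]"
proof (rule sorted_distinct_set_unique)
  have "sorted_wrt (<) (map g [0..<m])"
    unfolding sorted_wrt_iff_nth_less using assms by auto
  then show "sorted (map g [0..<m])" "distinct (map g [0..<m])"
    by (auto simp: strict_sorted_iff)
qed (use assms in \<open>auto intro!: sorted_wrt_filter simp: sorted_wrt_upt\<close>)

lemma embedding_order_iso: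
  assumes "embedding a b g"
  shows "order_iso a (nths b (g`{..<length a}))"
proof -
  have "nths b (g`{..<length a}) = map (\<lambda>i. b!(g i)) [0..<length a]"
    using assms unfolding nths_as_map embedding_def
    by (subst filter_mem_image_upt[of "length a" g "length b"]) auto
  then show ?thesis using assms by (auto simp: order_iso_def embedding_def)
qed

lemma order_iso_embedding:
  assumes "order_iso a (nths b E)"
  shows "\<exists>g. embedding a b g \<and> g`{..<length a} = E \<inter> {..<length b}"
proof -
  define L where "L = filter (\<lambda>i. i \<in> E) [0..<length b]"
  have sorted: "sorted_wrt (<) L" unfolding L_def
    by (rule sorted_wrt_filter) (simp add: sorted_wrt_upt)
  have nths_L: "nths b E = map (nth b) L" unfolding L_def nths_as_map ..
  have len: "length a = length L" using assms nths_L by (simp add: order_iso_def)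
  have set_L: "set L = E \<inter> {..<length b}" unfolding L_def by auto
  have "embedding a b (nth L)"
    unfolding embedding_def
  proof (intro conjI allI impI)
    fix i assume "i < length a"
    then have "L!i \<in> set L" using len by simp
    then show "L!i < length b" using set_L by auto
  next
    fix i j assume "i < j" "j < length a"
    then show "L!i < L!j" using sorted len by (simp add: sorted_wrt_iff_nth_less)
  next
    fix i j assume "i < length a" "j < length a"
    then show "(a!i < a!j) = (b!(L!i) < b!(L!j))"
      using assms nths_L len by (simp add: order_iso_def)
  qed
  moreover have "(nth L)`{..<length a} = E \<inter> {..<length b}"
    using len set_L by (auto simp: set_conv_nth)
  ultimately show ?thesis by blast
qed

lemma contains_iff_embedding: "a \<preceq> b \<longleftrightarrow> (\<exists>g. embedding a b g)"
proof
  assume "a \<preceq> b"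
  then obtain I where "order_iso a (nths b I)" unfolding contains_def by blast
  then show "\<exists>g. embedding a b g" using order_iso_embedding by blast
next
  assume "\<exists>g. embedding a b g"
  then obtain g where g: "embedding a b g" by blast
  then have "g`{..<length a} \<subseteq> {..<length b}" by (auto simp: embedding_def)
  then show "a \<preceq> b" unfolding contains_def using embedding_order_iso[OF g] by blast
qed

lemma embedding_comp: "embedding a b g \<Longrightarrow> embedding b c h \<Longrightarrow> embedding a c (h \<circ> g)"
  unfolding embedding_def by auto

lemma contains_trans: "a \<preceq> b \<Longrightarrow> b \<preceq> c \<Longrightarrow> a \<preceq> c"
  using embedding_comp contains_iff_embedding by metis

lemma order_iso_sym: "order_iso a b \<Longrightarrow> order_iso b a"
  unfolding order_iso_def by auto

lemma contains_iso_right: "a \<preceq> b \<Longrightarrow> order_iso b c \<Longrightarrow> a \<preceq> c"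
  unfolding contains_iff_embedding embedding_def order_iso_def by metis

lemma contains_iso_left: "a \<preceq> b \<Longrightarrow> order_iso a c \<Longrightarrow> c \<preceq> b"
  unfolding contains_iff_embedding embedding_def order_iso_def by metis

lemma embedding_card: "embedding a b g \<Longrightarrow> card (g`{..<length a}) = length a"
proof -
  assume g: "embedding a b g"
  have "inj_on g {..<length a}" using g unfolding embedding_def inj_on_def
    by (metis lessThan_iff nat_neq_iff)
  then show ?thesis by (simp add: card_image)
qed

section \<open>Standardization of a sequence of distinct numbers\<close>

text \<open>\<open>std xs\<close> replaces each entry by its rank, producing the permutation in the same
  relative order as \<open>xs\<close>; it is how subpermutations of \<open>b\<close> are named.\<close>
definition std :: "nat list \<Rightarrow> nat list" where
  "std xs = map (\<lambda>x. card {y \<in> set xs. y \<le> x}) xs"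

lemma rank_less_iff:
  fixes x y :: nat
  assumes "finite S" "y \<in> S"
  shows "x < y \<longleftrightarrow> card {z\<in>S. z \<le> x} < card {z\<in>S. z \<le> y}"
proof
  assume "x < y"
  then have sub: "{z\<in>S. z \<le> x} \<subseteq> {z\<in>S. z \<le> y}" by auto
  have "y \<in> {z\<in>S. z \<le> y}" "y \<notin> {z\<in>S. z \<le> x}" using assms \<open>x < y\<close> by auto
  then have "{z\<in>S. z \<le> x} \<subset> {z\<in>S. z \<le> y}" using sub by blast
  then show "card {z\<in>S. z \<le> x} < card {z\<in>S. z \<le> y}"
    using assms by (intro psubset_card_mono) auto
next
  assume "card {z\<in>S. z \<le> x} < card {z\<in>S. z \<le> y}"
  moreover have "y \<le> x \<Longrightarrow> card {z\<in>S. z \<le> y} \<le> card {z\<in>S. z \<le> x}"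
    using assms by (intro card_mono) auto
  ultimately show "x < y" by linarith
qed

lemma length_std[simp]: "length (std xs) = length xs"
  by (simp add: std_def)

lemma std_iso: "order_iso xs (std xs)"
  unfolding order_iso_def std_def
proof (intro conjI allI impI)
  fix i j assume "i < length xs" "j < length xs"
  then show "(xs ! i < xs ! j) =
      (map (\<lambda>x. card {y \<in> set xs. y \<le> x}) xs ! i < map (\<lambda>x. card {y \<in> set xs. y \<le> x}) xs ! j)"
    using rank_less_iff[of "set xs" "xs!j" "xs!i"] by simp
qed simp

lemma order_iso_distinct: "order_iso xs ys \<Longrightarrow> distinct xs \<Longrightarrow> distinct ys"
  unfolding order_iso_def distinct_conv_nth by (metis less_irrefl nat_neq_iff)

lemma std_perm:
  assumes "distinct xs"
  shows "is_perm (std xs)"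
proof -
  have dist: "distinct (std xs)" using order_iso_distinct[OF std_iso assms] .
  have card_xs: "card (set xs) = length xs" using assms by (simp add: distinct_card)
  have "set (std xs) \<subseteq> {1..length xs}"
  proof
    fix v assume "v \<in> set (std xs)"
    then obtain x where x: "x \<in> set xs" "v = card {y \<in> set xs. y \<le> x}"
      by (auto simp: std_def)
    have "{y \<in> set xs. y \<le> x} \<noteq> {}" using x by auto
    then have "1 \<le> v" using x by (simp add: Suc_le_eq card_gt_0_iff)
    moreover have "v \<le> length xs" using x card_xs
      by (metis (no_types, lifting) card_mono finite_set mem_Collect_eq subsetI)
    ultimately show "v \<in> {1..length xs}" by simp
  qed
  moreover have "card (set (std xs)) = length xs" using dist by (simp add: distinct_card)
  ultimately have "set (std xs) = {1..length xs}" by (intro card_subset_eq) auto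
  then show ?thesis using dist by (simp add: is_perm_def)
qed

lemma std_of_perm: "is_perm a \<Longrightarrow> std a = a"
proof -
  assume p: "is_perm a"
  have "card {y \<in> set a. y \<le> x} = x" if "x \<in> set a" for x
  proof -
    have "{y \<in> set a. y \<le> x} = {1..x}" using p that by (auto simp: is_perm_def)
    then show ?thesis by simp
  qed
  then show ?thesis unfolding std_def by (simp add: map_idI)
qed

lemma std_nth_card:
  assumes "distinct xs" "i < length xs"
  shows "std xs ! i = card {j. j < length xs \<and> xs!j \<le> xs!i}"
proof -
  have "{y \<in> set xs. y \<le> xs!i} = nth xs ` {j. j < length xs \<and> xs!j \<le> xs!i}"
    by (auto simp: in_set_conv_nth)
  moreover have "inj_on (nth xs) {j. j < length xs \<and> xs!j \<le> xs!i}"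
    using assms by (auto simp: inj_on_def nth_eq_iff_index_eq)
  ultimately show ?thesis using assms by (simp add: std_def card_image)
qed

lemma order_iso_std_eq:
  assumes "order_iso xs ys" "distinct xs"
  shows "std xs = std ys"
proof (rule nth_equalityI)
  have dist_ys: "distinct ys" using order_iso_distinct assms by blast
  have len: "length xs = length ys" using assms by (simp add: order_iso_def)
  fix i assume i: "i < length (std xs)"
  have "{j. j < length xs \<and> xs!j \<le> xs!i} = {j. j < length ys \<and> ys!j \<le> ys!i}"
    using assms(1) i len unfolding order_iso_def by (auto simp: not_less[symmetric])
  then show "std xs ! i = std ys ! i"
    using std_nth_card[OF assms(2)] std_nth_card[OF dist_ys] i len by simp
qed (use assms in \<open>simp add: order_iso_def\<close>)

lemma perm_order_iso_eq: "is_perm a \<Longrightarrow> is_perm b \<Longrightarrow> order_iso a b \<Longrightarrow> a = b"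
  by (metis order_iso_std_eq std_of_perm is_perm_def)

lemma nths_restrict: "nths xs (A \<inter> {..<length xs}) = nths xs A"
  unfolding nths_as_map by (rule arg_cong[where f="map (nth xs)"], rule filter_cong) auto

lemma length_nths_subset: "T \<subseteq> {..<length b} \<Longrightarrow> length (nths b T) = card T"
proof -
  assume "T \<subseteq> {..<length b}"
  then have "{i. i < length b \<and> i \<in> T} = T" by auto
  then show ?thesis by (simp add: length_nths)
qed

text \<open>Ranks of the elements of an index set \<open>T\<close>, used to re-index \<open>nths b T\<close>.\<close>
lemma rank_mono:
  fixes i i' :: nat
  assumes "i \<in> T" "i < i'"
  shows "card {l\<in>T. l < i} < card {l\<in>T. l < i'}"
proof (rule psubset_card_mono)
  show "finite {l \<in> T. l < i'}" by (rule finite_subset[of _ "{..<i'}"]) auto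
  have "i \<in> {l\<in>T. l < i'}" "i \<notin> {l\<in>T. l < i}" using assms by auto
  moreover have "{l\<in>T. l < i} \<subseteq> {l\<in>T. l < i'}" using assms by auto
  ultimately show "{l \<in> T. l < i} \<subset> {l \<in> T. l < i'}" by blast
qed

lemma rank_inj:
  "(i::nat) \<in> T \<Longrightarrow> i' \<in> T \<Longrightarrow> card {l\<in>T. l < i} = card {l\<in>T. l < i'} \<Longrightarrow> i = i'"
  using rank_mono[of i T i'] rank_mono[of i' T i] by (cases i i' rule: linorder_cases) auto

lemma nths_subset_contains:
  assumes "E \<subseteq> T"
  shows "nths b E \<preceq> nths b T"
proof -
  define J where "J = (\<lambda>i. card {l\<in>T. l < i}) ` E"
  have "{i\<in>T. \<exists>j\<in>J. card {l\<in>T. l < i} = j} = E"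
    using assms rank_inj unfolding J_def by blast
  then have "nths (nths b T) J = nths b E" by (simp add: nths_nths)
  then have "nths (nths b T) (J \<inter> {..<length (nths b T)}) = nths b E"
    by (simp add: nths_restrict)
  then show ?thesis unfolding contains_def
    by (metis inf_le2 order_iso_def)
qed

lemma contains_std_nths:
  assumes "order_iso x (nths b E)" "E \<subseteq> T"
  shows "x \<preceq> std (nths b T)"
proof -
  have "nths b E \<preceq> nths b T" using nths_subset_contains assms(2) .
  then have "x \<preceq> nths b T" using contains_iso_left order_iso_sym assms(1) by blast
  then show ?thesis using contains_iso_right std_iso by blast
qed

lemma std_nths_contained: "std (nths b T) \<preceq> b"
proof -
  have "order_iso (std (nths b T)) (nths b (T \<inter> {..<length b}))"
    unfolding nths_restrict by (rule order_iso_sym[OF std_iso])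
  then show ?thesis unfolding contains_def by (intro exI[of _ "T \<inter> {..<length b}"]) simp
qed

section \<open>Gaps of occurrences and connectivity of the open interval\<close>

text \<open>A \<^emph>\<open>gap\<close> of an
  occurrence \<open>g\<close> of \<open>a\<close> in \<open>b\<close> is a position of \<open>b\<close> not used by \<open>g\<close>; deleting a gap from
  \<open>b\<close> gives a coatom of \<open>[a, b]\<close>.  Two positions are \<^emph>\<open>gap-related\<close> if they are gaps of a
  common occurrence; then the corresponding coatoms share a lower bound of rank two below
  \<open>b\<close>, which still lies in the open interval because the rank is at least 3.\<close>
locale rank3_interval =
  fixes a b :: "nat list"
  assumes perm_a: "is_perm a" and perm_b: "is_perm b"
    and rank3: "length a + 3 \<le> length b"
begin

abbreviation "n \<equiv> length b"
abbreviation "m \<equiv> length a"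

definition used :: "(nat \<Rightarrow> nat) \<Rightarrow> nat set" where
  "used g = g ` {..<m}"

definition gap_rel :: "(nat \<times> nat) set" where
  "gap_rel = {(i,j). \<exists>g. embedding a b g \<and> i < n \<and> j < n \<and> i \<notin> used g \<and> j \<notin> used g}"

definition linked :: "(nat \<Rightarrow> nat) \<Rightarrow> (nat \<Rightarrow> nat) \<Rightarrow> bool" where
  "linked g g' \<longleftrightarrow>
     (\<forall>i j. i < n \<longrightarrow> j < n \<longrightarrow> i \<notin> used g \<longrightarrow> j \<notin> used g' \<longrightarrow> (i,j) \<in> gap_rel\<^sup>*)"

lemma distinct_b: "distinct b" using perm_b by (simp add: is_perm_def)

lemma b_inj: "p < n \<Longrightarrow> q < n \<Longrightarrow> b!p = b!q \<Longrightarrow> p = q"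
  using distinct_b by (simp add: nth_eq_iff_index_eq)

lemma gap_relI:
  "embedding a b g \<Longrightarrow> i < n \<Longrightarrow> j < n \<Longrightarrow> i \<notin> used g \<Longrightarrow> j \<notin> used g \<Longrightarrow> (i,j) \<in> gap_rel"
  unfolding gap_rel_def by blast

lemma gap_rel_sym: "sym gap_rel"
  unfolding gap_rel_def sym_def by blast

lemma gap_rel_rtrancl_sym: "(i,j) \<in> gap_rel\<^sup>* \<Longrightarrow> (j,i) \<in> gap_rel\<^sup>*"
  using gap_rel_sym by (meson sym_rtrancl symD)

lemma linked_sym: "linked g g' \<Longrightarrow> linked g' g"
  unfolding linked_def using gap_rel_rtrancl_sym by blast

lemma card_used: "embedding a b g \<Longrightarrow> card (used g) = m"
  unfolding used_def using embedding_card by blast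

lemma used_subset: "embedding a b g \<Longrightarrow> used g \<subseteq> {..<n}"
  unfolding used_def embedding_def by auto

lemma exists_outside:
  assumes "A \<subseteq> {..<n}" "card A < n"
  shows "\<exists>z. z < n \<and> z \<notin> A"
proof (rule ccontr)
  assume "\<not> ?thesis"
  then have "{..<n} \<subseteq> A" by auto
  then have "n \<le> card A" using assms by (metis card_lessThan card_mono finite_lessThan finite_subset)
  then show False using assms by simp
qed

lemma linked_if_common_gap:
  assumes "embedding a b g" "embedding a b g'" "card (used g \<union> used g') < n"
  shows "linked g g'"
proof -
  have "used g \<union> used g' \<subseteq> {..<n}" using used_subset assms by auto
  then obtain z where z: "z < n" "z \<notin> used g \<union> used g'"
    using exists_outside assms(3) by blast
  show ?thesis unfolding linked_def
  proof (intro allI impI)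
    fix i j assume "i < n" "j < n" "i \<notin> used g" "j \<notin> used g'"
    then have "(i,z) \<in> gap_rel" "(z,j) \<in> gap_rel" using z assms gap_relI by auto
    then show "(i,j) \<in> gap_rel\<^sup>*" by auto
  qed
qed

text \<open>Occurrences differing in one position are linked, since \<open>n \<ge> m + 2\<close>.\<close>
lemma linked_update:
  assumes "embedding a b g" "embedding a b (g(j0 := v))" "j0 < m"
  shows "linked g (g(j0 := v))"
proof (rule linked_if_common_gap[OF assms(1,2)])
  have "used g \<union> used (g(j0 := v)) \<subseteq> insert v (used g)" unfolding used_def by auto
  then have "card (used g \<union> used (g(j0 := v))) \<le> card (insert v (used g))"
    by (intro card_mono) (auto simp: used_def)
  also have "\<dots> \<le> Suc m" using card_used[OF assms(1)] by (simp add: card_insert_if used_def)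
  finally show "card (used g \<union> used (g(j0 := v))) < n" using rank3 by simp
qed

lemma linked_trans:
  assumes "linked g g''" "linked g'' g'" "embedding a b g''"
  shows "linked g g'"
proof -
  have "card (used g'') < n" using card_used assms rank3 by simp
  then obtain z where z: "z < n" "z \<notin> used g''"
    using exists_outside used_subset assms by blast
  show ?thesis unfolding linked_def
  proof (intro allI impI)
    fix i j assume "i < n" "j < n" "i \<notin> used g" "j \<notin> used g'"
    then have "(i,z) \<in> gap_rel\<^sup>*" "(z,j) \<in> gap_rel\<^sup>*" using z assms unfolding linked_def by auto
    then show "(i,j) \<in> gap_rel\<^sup>*" by auto
  qed
qed

definition coatom :: "nat \<Rightarrow> nat list" where
  "coatom i = std (nths b ({..<n} - {i}))"

definition delete2 :: "nat \<Rightarrow> nat \<Rightarrow> nat list" where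
  "delete2 i j = std (nths b ({..<n} - {i, j}))"

lemma std_nths_props:
  assumes "T \<subseteq> {..<n}"
  shows "is_perm (std (nths b T))" "length (std (nths b T)) = card T" "std (nths b T) \<preceq> b"
  using std_perm distinct_b length_nths_subset[OF assms] std_nths_contained by auto

lemma pattern_le_std_nths:
  assumes "embedding a b g" "used g \<subseteq> T"
  shows "a \<preceq> std (nths b T)"
  using contains_std_nths embedding_order_iso[OF assms(1)] assms(2) unfolding used_def by blast

lemma open_interval_iff:
  "x \<in> open_interval a b \<longleftrightarrow> is_perm x \<and> a \<preceq> x \<and> x \<preceq> b \<and> x \<noteq> a \<and> x \<noteq> b"
  unfolding open_interval_def perm_interval_def by auto

text \<open>Deleting gaps of an occurrence stays above \<open>a\<close>; the lengths \<open>n - 1\<close> and \<open>n - 2\<close>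
  lie strictly between \<open>m\<close> and \<open>n\<close> (this is where the rank bound is used).\<close>
lemma delete_gaps_in_interval:
  assumes g: "embedding a b g" and D: "D \<subseteq> {..<n}" "D \<inter> used g = {}" "1 \<le> card D" "card D \<le> 2"
  shows "std (nths b ({..<n} - D)) \<in> open_interval a b"
proof -
  define T where "T = {..<n} - D"
  have T: "T \<subseteq> {..<n}" "card T = n - card D"
    unfolding T_def using D by (auto simp: card_Diff_subset finite_subset)
  have "used g \<subseteq> T" using used_subset g D unfolding T_def by auto
  then have "a \<preceq> std (nths b T)" using pattern_le_std_nths g by blast
  moreover have "std (nths b T) \<noteq> a" "std (nths b T) \<noteq> b"
    using std_nths_props(2)[OF T(1)] T(2) D rank3 by (auto dest: arg_cong[of _ _ length])
  ultimately show ?thesis unfolding open_interval_iff T_def[symmetric]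
    using std_nths_props[OF T(1)] by auto
qed

lemma coatom_in_interval:
  "embedding a b g \<Longrightarrow> i < n \<Longrightarrow> i \<notin> used g \<Longrightarrow> coatom i \<in> open_interval a b"
  unfolding coatom_def by (rule delete_gaps_in_interval) auto

lemma delete2_in_interval:
  assumes "embedding a b g" "i < n" "j < n" "i \<notin> used g" "j \<notin> used g"
  shows "delete2 i j \<in> open_interval a b"
  unfolding delete2_def
  using assms by (intro delete_gaps_in_interval) (auto simp: card_insert_if)

lemma delete2_le_coatom: "delete2 i j \<preceq> coatom i" "delete2 i j \<preceq> coatom j"
proof -
  have "order_iso (delete2 i j) (nths b ({..<n} - {i, j}))"
    unfolding delete2_def using std_iso order_iso_sym by blast
  then show "delete2 i j \<preceq> coatom i" "delete2 i j \<preceq> coatom j" unfolding coatom_def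
    by (auto intro: contains_std_nths)
qed

abbreviation comparable :: "(nat list \<times> nat list) set" where
  "comparable \<equiv> comparability (open_interval a b)"

text \<open>Gap-related positions give coatoms joined through a common lower bound in the interval.\<close>
lemma gap_rel_coatoms_connected:
  assumes "(i,j) \<in> gap_rel\<^sup>*"
  shows "(coatom i, coatom j) \<in> comparable\<^sup>*"
  using assms
proof (induction rule: rtrancl_induct)
  case (step j j')
  then obtain g where g: "embedding a b g" "j < n" "j' < n" "j \<notin> used g" "j' \<notin> used g"
    unfolding gap_rel_def by blast
  then have "coatom j \<in> open_interval a b" "coatom j' \<in> open_interval a b"
      "delete2 j j' \<in> open_interval a b"
    using coatom_in_interval delete2_in_interval by auto
  then have "(coatom j, delete2 j j') \<in> comparable" "(delete2 j j', coatom j') \<in> comparable"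
    using delete2_le_coatom unfolding comparability_def by auto
  then show ?case using step.IH by (meson rtrancl.rtrancl_into_rtrancl)
qed simp

lemma below_gap_coatom:
  assumes x: "x \<in> open_interval a b"
  shows "\<exists>i g. embedding a b g \<and> i < n \<and> i \<notin> used g \<and> (x, coatom i) \<in> comparable"
proof -
  have px: "is_perm x" "a \<preceq> x" "x \<preceq> b" "x \<noteq> b" using x open_interval_iff by auto
  obtain hx where hx: "embedding x b hx" using px contains_iff_embedding by blast
  obtain ga where ga: "embedding a x ga" using px contains_iff_embedding by blast
  define H where "H = hx ` {..<length x}"
  have H: "H \<subseteq> {..<n}" using hx unfolding H_def embedding_def by auto
  have x_iso: "order_iso x (nths b H)" using embedding_order_iso hx H_def by simp
  have "H \<noteq> {..<n}"
  proof
    assume "H = {..<n}"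
    then have "x = b" using perm_order_iso_eq px perm_b x_iso by simp
    then show False using px by simp
  qed
  then obtain i where i: "i < n" "i \<notin> H" using H by blast
  define g where "g = hx \<circ> ga"
  have g: "embedding a b g" using embedding_comp ga hx g_def by blast
  have "used g \<subseteq> H" unfolding used_def g_def H_def using ga unfolding embedding_def by auto
  then have i_gap: "i \<notin> used g" using i by auto
  have "H \<subseteq> {..<n} - {i}" using H i by auto
  then have "x \<preceq> coatom i" unfolding coatom_def using contains_std_nths x_iso by blast
  then have "(x, coatom i) \<in> comparable"
    using x coatom_in_interval[OF g i(1) i_gap] unfolding comparability_def by auto
  then show ?thesis using g i i_gap by blast
qed

theorem connected_if_all_linked:
  assumes all_linked: "\<And>g g'. embedding a b g \<Longrightarrow> embedding a b g' \<Longrightarrow> linked g g'"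
  shows "poset_connected (open_interval a b)"
  unfolding poset_connected_def
proof (intro ballI)
  fix x y assume "x \<in> open_interval a b" "y \<in> open_interval a b"
  then obtain i g j g' where
    i: "embedding a b g" "i < n" "i \<notin> used g" "(x, coatom i) \<in> comparable" and
    j: "embedding a b g'" "j < n" "j \<notin> used g'" "(y, coatom j) \<in> comparable"
    using below_gap_coatom by meson
  have "(coatom i, coatom j) \<in> comparable\<^sup>*"
    using all_linked[OF i(1) j(1)] i j gap_rel_coatoms_connected unfolding linked_def by blast
  moreover have "(coatom j, y) \<in> comparable" using j(4) unfolding comparability_def by auto
  ultimately show "(x, y) \<in> comparable\<^sup>*" using i(4)
    by (meson converse_rtrancl_into_rtrancl rtrancl.rtrancl_into_rtrancl)
qed

end

section \<open>Permutations with one descent\<close>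

lemma descent_between:
  "i < j \<Longrightarrow> j < length (xs::nat list) \<Longrightarrow> xs!i > xs!j
     \<Longrightarrow> \<exists>r. i \<le> r \<and> r < j \<and> xs!r > xs!(Suc r)"
proof (induction j)
  case (Suc j)
  show ?case
  proof (cases "xs!j > xs!(Suc j)")
    case True
    then show ?thesis using Suc.prems by (intro exI[of _ j]) simp
  next
    case False
    then have "i < j" "xs!i > xs!j" using Suc.prems by (auto simp: less_Suc_eq)
    then show ?thesis using Suc.IH Suc.prems by (meson Suc_lessD less_SucI)
  qed
qed simp

text \<open>A pattern of a permutation with exactly one descent has at most one descent: each
  descent of the pattern is witnessed by a descent of the permutation between the images of
  its two positions, and distinct descents give disjoint ranges.\<close>
lemma pattern_descent_unique:
  assumes contained: "b \<preceq> p" and one: "card (descents p) = 1"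
    and r: "r \<in> descents b" and r': "r' \<in> descents b"
  shows "r = r'"
proof -
  obtain h where h: "embedding b p h" using contained contains_iff_embedding by blast
  have h_mono: "\<And>i j. i < j \<Longrightarrow> j < length b \<Longrightarrow> h i < h j"
    and h_len: "\<And>i. i < length b \<Longrightarrow> h i < length p"
    and h_val: "\<And>i j. i < length b \<Longrightarrow> j < length b \<Longrightarrow> b!i < b!j \<longleftrightarrow> p!(h i) < p!(h j)"
    using h unfolding embedding_def by auto
  have witness: "\<exists>\<rho>. \<rho> \<in> descents p \<and> h r \<le> \<rho> \<and> \<rho> < h (Suc r)" if "r \<in> descents b" for r
  proof -
    have r: "Suc r < length b" "b!(Suc r) < b!r" using that unfolding descents_def by auto
    then have "p!(h (Suc r)) < p!(h r)" "h r < h (Suc r)" "h (Suc r) < length p"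
      using h_val h_mono h_len by auto
    then obtain \<rho> where "h r \<le> \<rho>" "\<rho> < h (Suc r)" "p!\<rho> > p!(Suc \<rho>)"
      using descent_between by blast
    moreover have "Suc \<rho> < length p" using \<open>h (Suc r) < length p\<close> \<open>\<rho> < h (Suc r)\<close> by simp
    ultimately show ?thesis unfolding descents_def by blast
  qed
  obtain z where z: "descents p = {z}" using one card_1_singletonE by blast
  have False if rr: "r \<in> descents b" "r' \<in> descents b" "r < r'" for r r'
  proof -
    obtain \<rho> where \<rho>: "\<rho> \<in> descents p" "\<rho> < h (Suc r)" using witness rr by blast
    obtain \<rho>' where \<rho>': "\<rho>' \<in> descents p" "h r' \<le> \<rho>'" using witness rr by blast
    have "Suc r' < length b" using rr unfolding descents_def by auto
    then have "h (Suc r) \<le> h r'" using h_mono rr by (metis Suc_lessD le_less Suc_leI)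
    then show False using \<rho> \<rho>' z by simp
  qed
  then show ?thesis using r r' by (metis nat_neq_iff)
qed

lemma increasing_runs:
  assumes "distinct xs" and descents: "\<And>r. r \<in> descents xs \<Longrightarrow> Suc r = k"
    and pq: "p < q" "q < length xs" "q < k \<or> k \<le> p"
  shows "xs!p < xs!q"
proof (rule ccontr)
  assume "\<not> xs!p < xs!q"
  moreover have "xs!p \<noteq> xs!q" using assms by (simp add: nth_eq_iff_index_eq)
  ultimately obtain r where "p \<le> r" "r < q" "xs!r > xs!(Suc r)"
    using descent_between pq by (metis linorder_neqE_nat)
  then have "r \<in> descents xs" using pq unfolding descents_def by auto
  then show False using descents pq \<open>p \<le> r\<close> \<open>r < q\<close> by fastforce
qed

lemma two_runs:
  assumes "distinct xs" and unique: "\<And>r r'. r \<in> descents xs \<Longrightarrow> r' \<in> descents xs \<Longrightarrow> r = r'"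
  shows "\<exists>k. \<forall>p q. p < q \<longrightarrow> q < length xs \<longrightarrow> (q < k \<or> k \<le> p) \<longrightarrow> xs!p < xs!q"
proof (cases "descents xs = {}")
  case True
  then show ?thesis using increasing_runs[OF assms(1)] by blast
next
  case False
  then obtain r0 where "r0 \<in> descents xs" by blast
  then have "\<And>r. r \<in> descents xs \<Longrightarrow> Suc r = Suc r0" using unique by blast
  then show ?thesis using increasing_runs[OF assms(1)] by blast
qed

lemma embedding_update:
  assumes g: "embedding a b g" and y: "y < length b"
    and pos: "\<And>l. l < length a \<Longrightarrow> l \<noteq> j0 \<Longrightarrow>
                 (g l < g j0 \<longleftrightarrow> g l < y) \<and> (g j0 < g l \<longleftrightarrow> y < g l)"
    and val: "\<And>l. l < length a \<Longrightarrow> l \<noteq> j0 \<Longrightarrow>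
                 (b!(g l) < b!(g j0) \<longleftrightarrow> b!(g l) < b!y) \<and> (b!(g j0) < b!(g l) \<longleftrightarrow> b!y < b!(g l))"
  shows "embedding a b (g(j0 := y))"
proof -
  have mono: "(g(j0 := y)) i < (g(j0 := y)) j" if ij: "i < j" "j < length a" for i j
  proof -
    have "g i < g j" "i < length a" using g ij unfolding embedding_def by auto
    then show ?thesis using pos[of i] pos[of j] ij by (cases "i = j0"; cases "j = j0") simp_all
  qed
  have order: "a!i < a!j \<longleftrightarrow> b!((g(j0 := y)) i) < b!((g(j0 := y)) j)"
    if ij: "i < length a" "j < length a" for i j
  proof -
    have "a!i < a!j \<longleftrightarrow> b!(g i) < b!(g j)" using g ij unfolding embedding_def by blast
    then show ?thesis using val[of i] val[of j] ij by (cases "i = j0"; cases "j = j0") simp_all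
  qed
  show ?thesis using g y mono order unfolding embedding_def by simp
qed

section \<open>Two increasing runs: the case where \<open>a\<close> has a descent\<close>

locale two_run_interval = rank3_interval +
  fixes k :: nat
  assumes runs_increasing: "\<And>p q. p < q \<Longrightarrow> q < length b \<Longrightarrow> q < k \<or> k \<le> p \<Longrightarrow> b!p < b!q"
begin

lemma run_order:
  assumes "p < n" "q < n" "p < k \<longleftrightarrow> q < k"
  shows "p < q \<longleftrightarrow> b!p < b!q"
proof
  assume "p < q" then show "b!p < b!q" using runs_increasing assms by auto
next
  assume "b!p < b!q"
  moreover have "q < p \<Longrightarrow> b!q < b!p" using runs_increasing assms by auto
  ultimately show "p < q" by (metis less_asym linorder_neqE_nat)
qed

definition same_runs :: "(nat \<Rightarrow> nat) \<Rightarrow> (nat \<Rightarrow> nat) \<Rightarrow> bool" where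
  "same_runs g g' \<longleftrightarrow> (\<forall>j<m. g j < k \<longleftrightarrow> g' j < k)"

text \<open>If \<open>g'\<close> has the smaller value at \<open>j0\<close>, then \<open>g\<close> may move its entry
  \<open>j0\<close> to \<open>g' j0\<close>: no other entry of \<open>g\<close> has a value between the two.\<close>
lemma exchange_step:
  assumes g: "embedding a b g" and g': "embedding a b g'" and runs: "same_runs g g'"
    and j0: "j0 < m" "g j0 \<noteq> g' j0"
    and minimal: "\<And>l. l < m \<Longrightarrow> g l \<noteq> g' l \<Longrightarrow>
                     min (b!(g j0)) (b!(g' j0)) \<le> min (b!(g l)) (b!(g' l))"
    and smaller: "b!(g' j0) < b!(g j0)"
  shows "embedding a b (g(j0 := g' j0))"
proof -
  define x where "x = g j0"
  define y where "y = g' j0"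
  have g_len: "\<And>l. l < m \<Longrightarrow> g l < n" and g_mono: "\<And>i j. i < j \<Longrightarrow> j < m \<Longrightarrow> g i < g j"
    and g_val: "\<And>i j. i < m \<Longrightarrow> j < m \<Longrightarrow> a!i < a!j \<longleftrightarrow> b!(g i) < b!(g j)"
    using g unfolding embedding_def by auto
  have g'_len: "\<And>l. l < m \<Longrightarrow> g' l < n"
    and g'_val: "\<And>i j. i < m \<Longrightarrow> j < m \<Longrightarrow> a!i < a!j \<longleftrightarrow> b!(g' i) < b!(g' j)"
    using g' unfolding embedding_def by auto
  have xy: "x < n" "y < n" "x < k \<longleftrightarrow> y < k" "b!y < b!x"
    using g_len g'_len j0 runs smaller unfolding same_runs_def x_def y_def by auto
  have no_value_between: "b!(g l) < b!y" if l: "l < m" "l \<noteq> j0" "b!(g l) < b!x" for l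
  proof (rule ccontr)
    assume above: "\<not> b!(g l) < b!y"
    have "a!l < a!j0" using g_val[OF l(1) j0(1)] l(3) x_def by simp
    then have "b!(g' l) < b!y" using g'_val[OF l(1) j0(1)] y_def by simp
    moreover have "g l \<noteq> g' l" using above calculation by auto
    then have "b!y \<le> b!(g' l)" using minimal[OF l(1)] xy(4) x_def y_def by simp
    ultimately show False by simp
  qed
  have val: "(b!(g l) < b!x \<longleftrightarrow> b!(g l) < b!y) \<and> (b!x < b!(g l) \<longleftrightarrow> b!y < b!(g l))"
    if l: "l < m" "l \<noteq> j0" for l
  proof -
    have "g l \<noteq> x" using g_mono l j0 unfolding x_def by (metis nat_neq_iff)
    then have "b!(g l) \<noteq> b!x" using b_inj g_len l xy by metis
    show ?thesis
    proof (cases "b!(g l) < b!x")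
      case True
      then show ?thesis using no_value_between[OF l True] xy(4) by auto
    next
      case False
      then show ?thesis using \<open>b!(g l) \<noteq> b!x\<close> xy(4) by auto
    qed
  qed
  have pos: "(g l < x \<longleftrightarrow> g l < y) \<and> (x < g l \<longleftrightarrow> y < g l)" if l: "l < m" "l \<noteq> j0" for l
  proof (cases "g l < k \<longleftrightarrow> x < k")
    case True
    have gl: "g l < n" using g_len l by simp
    have Ty: "g l < k \<longleftrightarrow> y < k" using True xy(3) by simp
    show ?thesis
      using run_order[OF gl xy(1) True] run_order[OF xy(1) gl True[symmetric]]
        run_order[OF gl xy(2) Ty] run_order[OF xy(2) gl Ty[symmetric]] val[OF l] by simp
  next
    case False
    then show ?thesis using xy(3) by auto
  qed
  show ?thesis
    using embedding_update[OF g xy(2)] val pos unfolding x_def y_def by blast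
qed

lemma exchange_exists:
  assumes g: "embedding a b g" and g': "embedding a b g'" and runs: "same_runs g g'"
    and differ: "{j. j < m \<and> g j \<noteq> g' j} \<noteq> {}"
  shows "\<exists>j0<m. g j0 \<noteq> g' j0 \<and>
           (embedding a b (g(j0 := g' j0)) \<or> embedding a b (g'(j0 := g j0)))"
proof -
  define D where "D = {j. j < m \<and> g j \<noteq> g' j}"
  define f where "f j = min (b!(g j)) (b!(g' j))" for j
  have fin: "finite (f ` D)" unfolding D_def by auto
  have "Min (f ` D) \<in> f ` D" using fin differ unfolding D_def by (intro Min_in) auto
  then obtain j0 where j0: "j0 \<in> D" "f j0 = Min (f ` D)" by auto
  have minimal: "f j0 \<le> f l" if "l \<in> D" for l using j0 that fin by simp
  have j0m: "j0 < m" "g j0 \<noteq> g' j0" using j0 D_def by auto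
  have "g j0 < n" "g' j0 < n" using g g' j0m unfolding embedding_def by auto
  then have "b!(g j0) \<noteq> b!(g' j0)" using b_inj j0m by blast
  then consider "b!(g' j0) < b!(g j0)" | "b!(g j0) < b!(g' j0)" by linarith
  then show ?thesis
  proof cases
    case 1
    then show ?thesis using exchange_step[OF g g' runs j0m] minimal j0m unfolding D_def f_def by auto
  next
    case 2
    have "same_runs g' g" using runs unfolding same_runs_def by auto
    then show ?thesis using exchange_step[OF g' g _ j0m(1) j0m(2)[symmetric]] 2 minimal j0m
      unfolding D_def f_def by (auto simp: min.commute)
  qed
qed

lemma linked_if_same_runs:
  "embedding a b g \<Longrightarrow> embedding a b g' \<Longrightarrow> same_runs g g' \<Longrightarrow> linked g g'"
proof (induction "card {j. j < m \<and> g j \<noteq> g' j}" arbitrary: g g' rule: less_induct)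
  case less
  show ?case
  proof (cases "{j. j < m \<and> g j \<noteq> g' j} = {}")
    case True
    then have "used g = used g'" unfolding used_def by (auto simp: image_def)
    then show ?thesis unfolding linked_def using gap_relI less.prems by (metis r_into_rtrancl)
  next
    case False
    then obtain j0 where j0: "j0 < m" "g j0 \<noteq> g' j0"
      and moved: "embedding a b (g(j0 := g' j0)) \<or> embedding a b (g'(j0 := g j0))"
      using exchange_exists less.prems by blast
    have fewer: "card {j. j < m \<and> (g(j0 := g' j0)) j \<noteq> g' j} < card {j. j < m \<and> g j \<noteq> g' j}"
      "card {j. j < m \<and> g j \<noteq> (g'(j0 := g j0)) j} < card {j. j < m \<and> g j \<noteq> g' j}"
      using j0 by (auto intro!: psubset_card_mono)
    have runs: "same_runs (g(j0 := g' j0)) g'" "same_runs g (g'(j0 := g j0))"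
      using less.prems(3) unfolding same_runs_def by auto
    from moved show ?thesis
    proof
      assume h: "embedding a b (g(j0 := g' j0))"
      then show ?thesis using less.hyps[OF fewer(1) h less.prems(2) runs(1)]
          linked_update[OF less.prems(1) h j0(1)] linked_trans by blast
    next
      assume h: "embedding a b (g'(j0 := g j0))"
      then show ?thesis using less.hyps[OF fewer(2) less.prems(1) h runs(2)]
          linked_sym[OF linked_update[OF less.prems(2) h j0(1)]] linked_trans by blast
    qed
  qed
qed

lemma descent_fixes_runs:
  assumes "j0 \<in> descents a" "embedding a b g" "l < m"
  shows "g l < k \<longleftrightarrow> l \<le> j0"
proof -
  have j0: "Suc j0 < m" "a!(Suc j0) < a!j0" using assms(1) unfolding descents_def by auto
  have g_mono: "\<And>i j. i < j \<Longrightarrow> j < m \<Longrightarrow> g i < g j" and g_len: "\<And>i. i < m \<Longrightarrow> g i < n"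
    using assms(2) unfolding embedding_def by auto
  have "b!(g (Suc j0)) < b!(g j0)" using assms j0 unfolding embedding_def by auto
  moreover have "g j0 < g (Suc j0)" using g_mono j0(1) by simp
  ultimately have k: "g j0 < k" "k \<le> g (Suc j0)"
    using runs_increasing g_len j0(1) by (meson Suc_lessD less_asym not_le)+
  show ?thesis
  proof
    assume "g l < k"
    then have "\<not> g (Suc j0) \<le> g l" using k by simp
    then show "l \<le> j0" using g_mono assms(3) by (metis not_less_eq_eq le_less)
  next
    assume "l \<le> j0"
    then have "g l \<le> g j0" using g_mono j0(1) by (metis le_less Suc_lessD)
    then show "g l < k" using k by simp
  qed
qed

lemma linked_if_descent:
  "descents a \<noteq> {} \<Longrightarrow> embedding a b g \<Longrightarrow> embedding a b g' \<Longrightarrow> linked g g'"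
  using descent_fixes_runs linked_if_same_runs unfolding same_runs_def by blast

end

definition count_in :: "(nat \<Rightarrow> bool) \<Rightarrow> nat \<Rightarrow> nat \<Rightarrow> nat" where
  "count_in P s e = card {v. s < v \<and> v \<le> e \<and> P v}"

lemma count_in_self[simp]: "count_in P s s = 0"
  unfolding count_in_def by simp

lemma count_in_Suc:
  assumes "s \<le> e"
  shows "count_in P s (Suc e) = count_in P s e + (if P (Suc e) then 1 else 0)"
proof -
  define S where "S = {v. s < v \<and> v \<le> e \<and> P v}"
  have "finite S" "Suc e \<notin> S" unfolding S_def by (auto intro: finite_subset[of _ "{..e}"])
  moreover have "{v. s < v \<and> v \<le> Suc e \<and> P v} = (if P (Suc e) then insert (Suc e) S else S)"
    unfolding S_def using assms by (auto simp: le_Suc_eq)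
  ultimately show ?thesis unfolding count_in_def S_def[symmetric] by simp
qed

lemma count_in_split:
  assumes "s \<le> e"
  shows "e \<le> f \<Longrightarrow> count_in P s f = count_in P s e + count_in P e f"
proof (induction f rule: dec_induct)
  case (step f) then show ?case using assms by (simp add: count_in_Suc)
qed simp

lemma count_in_compl: "s \<le> e \<Longrightarrow> count_in P s e + count_in (\<lambda>v. \<not> P v) s e = e - s"
proof (induction e rule: dec_induct)
  case (step e') then show ?case by (simp add: count_in_Suc Suc_diff_le)
qed simp

lemma count_in_pos: "0 < count_in P s e \<Longrightarrow> \<exists>v. s < v \<and> v \<le> e \<and> P v"
  unfolding count_in_def by (metis (mono_tags, lifting) card.empty empty_Collect_eq less_irrefl)

lemma count_in_elements:
  assumes "r \<le> count_in P s e"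
  shows "\<exists>vs. length vs = r \<and> sorted_wrt (<) vs \<and> (\<forall>v\<in>set vs. s < v \<and> v \<le> e \<and> P v)"
proof -
  define S where "S = {v. s < v \<and> v \<le> e \<and> P v}"
  have "finite S" unfolding S_def by (auto intro: finite_subset[of _ "{..e}"])
  define vs where "vs = take r (sorted_list_of_set S)"
  have "length vs = r" using assms unfolding vs_def count_in_def S_def[symmetric] by simp
  moreover have "sorted_wrt (<) vs"
    unfolding vs_def by (rule sorted_wrt_take[OF strict_sorted_list_of_set])
  moreover have "set vs \<subseteq> S" unfolding vs_def using \<open>finite S\<close> set_take_subset by fastforce
  ultimately show ?thesis unfolding S_def by blast
qed

context two_run_interval
begin

section \<open>Cuts of a permutation with two increasing runs\<close>

lemma b_values: "p < n \<Longrightarrow> 1 \<le> b!p \<and> b!p \<le> n"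
  using perm_b unfolding is_perm_def by (metis atLeastAtMost_iff nth_mem)

definition position_of :: "nat \<Rightarrow> nat" where
  "position_of v = (SOME p. p < n \<and> b!p = v)"

lemma position_of: "1 \<le> v \<Longrightarrow> v \<le> n \<Longrightarrow> position_of v < n \<and> b!(position_of v) = v"
proof -
  assume "1 \<le> v" "v \<le> n"
  then have "v \<in> set b" using perm_b unfolding is_perm_def by auto
  then have "\<exists>p. p < n \<and> b!p = v" by (simp add: in_set_conv_nth)
  then show ?thesis unfolding position_of_def by (rule someI_ex)
qed

lemma position_of_nth: "p < n \<Longrightarrow> position_of (b!p) = p"
  using position_of b_values b_inj by metis

definition in_first_run :: "nat \<Rightarrow> bool" where
  "in_first_run v \<longleftrightarrow> position_of v < k"

lemma in_first_run_nth: "p < n \<Longrightarrow> in_first_run (b!p) \<longleftrightarrow> p < k"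
  unfolding in_first_run_def using position_of_nth by simp

text \<open>The cut at threshold \<open>e\<close>: the entries of the first run above \<open>e\<close> and of the second
  run at most \<open>e\<close>.  Its complement is increasing, and every increasing set of positions
  misses some cut.\<close>
definition cut_values :: "nat \<Rightarrow> nat set" where
  "cut_values e = {v. 1 \<le> v \<and> v \<le> n \<and> (in_first_run v \<longleftrightarrow> e < v)}"

definition cut :: "nat \<Rightarrow> nat set" where
  "cut e = {p. p < n \<and> b!p \<in> cut_values e}"

lemma cut_iff: "p \<in> cut e \<longleftrightarrow> p < n \<and> (p < k \<longleftrightarrow> e < b!p)"
  unfolding cut_def cut_values_def using in_first_run_nth b_values by auto

lemma cut_subset: "cut e \<subseteq> {..<n}"
  unfolding cut_def by auto

lemma position_of_in_cut: "v \<in> cut_values e \<Longrightarrow> position_of v \<in> cut e"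
  using position_of unfolding cut_def cut_values_def by auto

lemma card_cut: "card (cut e) = card (cut_values e)"
proof -
  have "inj_on (nth b) (cut e)" using b_inj unfolding cut_def inj_on_def by auto
  moreover have "nth b ` cut e = cut_values e"
  proof
    show "nth b ` cut e \<subseteq> cut_values e" unfolding cut_def by auto
    show "cut_values e \<subseteq> nth b ` cut e"
    proof
      fix v assume v: "v \<in> cut_values e"
      then have "b!(position_of v) = v" using position_of unfolding cut_values_def by auto
      then show "v \<in> nth b ` cut e" using position_of_in_cut[OF v] by (metis image_eqI)
    qed
  qed
  ultimately show ?thesis by (metis card_image)
qed

definition increasing_set :: "nat set \<Rightarrow> bool" where
  "increasing_set E \<longleftrightarrow> E \<subseteq> {..<n} \<and> (\<forall>p\<in>E. \<forall>q\<in>E. p < q \<longrightarrow> b!p < b!q)"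

lemma increasing_if_disjoint_cut:
  assumes "E \<subseteq> {..<n}" "E \<inter> cut t = {}"
  shows "increasing_set E"
  unfolding increasing_set_def
proof (intro conjI ballI impI assms(1))
  fix p q assume pq: "p \<in> E" "q \<in> E" "p < q"
  then have "p < n" "q < n" "p \<notin> cut t" "q \<notin> cut t" using assms by auto
  then have "p < k \<longleftrightarrow> b!p \<le> t" "q < k \<longleftrightarrow> b!q \<le> t"
    using cut_iff[of p t] cut_iff[of q t] by auto
  show "b!p < b!q"
  proof (cases "q < k \<or> k \<le> p")
    case True
    then show ?thesis using runs_increasing pq \<open>q < n\<close> by blast
  next
    case False
    then have "b!p \<le> t" "t < b!q" using \<open>p < k \<longleftrightarrow> b!p \<le> t\<close> \<open>q < k \<longleftrightarrow> b!q \<le> t\<close> by auto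
    then show ?thesis by simp
  qed
qed

text \<open>An increasing set misses the cut at the largest value it takes in the first run.\<close>
lemma increasing_set_misses_cut:
  assumes "increasing_set E"
  shows "\<exists>t\<le>n. E \<inter> cut t = {}"
proof -
  have E: "E \<subseteq> {..<n}" and incr: "\<And>p q. p \<in> E \<Longrightarrow> q \<in> E \<Longrightarrow> p < q \<Longrightarrow> b!p < b!q"
    using assms unfolding increasing_set_def by auto
  define M where "M = insert 0 ((nth b) ` {p\<in>E. p < k})"
  define t where "t = Max M"
  have fin: "finite M" using E unfolding M_def by (auto intro: finite_subset[of _ "{..<n}"])
  have "p \<notin> cut t" if p: "p \<in> E" for p
  proof (cases "p < k")
    case True
    then have "b!p \<le> t" using p fin unfolding t_def M_def by simp
    then show ?thesis using True cut_iff by auto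
  next
    case False
    have "x < b!p" if "x \<in> M" for x
      using that incr[OF _ p] b_values[of p] p E False unfolding M_def by fastforce
    then have "t < b!p" using fin unfolding t_def M_def by simp
    then show ?thesis using False cut_iff by auto
  qed
  moreover have "t \<le> n"
    using Max_in[OF fin] b_values E unfolding t_def M_def by fastforce
  ultimately show ?thesis by blast
qed

text \<open>If two cuts at thresholds \<open>t1 \<le> t2\<close> are disjoint, then all values up to \<open>t1\<close> lie in the
  first run and all values above \<open>t2\<close> in the second, so the size of an intermediate cut
  is a count of values between the thresholds.\<close>
lemma card_cut_between:
  assumes disjoint: "cut t1 \<inter> cut t2 = {}" and e: "t1 \<le> e" "e \<le> t2" and "t2 \<le> n"
  shows "card (cut e) = count_in (\<lambda>v. \<not> in_first_run v) t1 e + count_in in_first_run e t2"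
proof -
  have in_both: "v \<notin> cut_values t1 \<inter> cut_values t2" for v
    using disjoint position_of_in_cut by blast
  have low: "in_first_run v" if "1 \<le> v" "v \<le> t1" for v
    using in_both[of v] that e \<open>t2 \<le> n\<close> unfolding cut_values_def by auto
  have high: "\<not> in_first_run v" if "t2 < v" "v \<le> n" for v
    using in_both[of v] that e unfolding cut_values_def by auto
  have split: "cut_values e = {v. t1 < v \<and> v \<le> e \<and> \<not> in_first_run v} \<union> {v. e < v \<and> v \<le> t2 \<and> in_first_run v}"
    using low high e \<open>t2 \<le> n\<close> unfolding cut_values_def by (auto simp: not_le) (meson not_le)+
  moreover have "finite {v. t1 < v \<and> v \<le> e \<and> \<not> in_first_run v}"
    "finite {v. e < v \<and> v \<le> t2 \<and> in_first_run v}" by (auto intro: finite_subset[of _ "{..t2}"])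
  ultimately show ?thesis
    unfolding card_cut count_in_def split by (subst card_Un_disjoint) auto
qed

text \<open>Increasing values \<open>V1\<close> from the first run followed by increasing values \<open>V2\<close> from the
  second run occur in this order in \<open>b\<close>, so every pattern order-isomorphic to \<open>V1 @ V2\<close> is
  contained in \<open>b\<close>.\<close>
lemma pattern_from_runs:
  assumes iso: "order_iso \<rho> (V1 @ V2)"
    and sorted: "sorted_wrt (<) V1" "sorted_wrt (<) V2"
    and vals: "set (V1 @ V2) \<subseteq> {1..n}"
    and first: "\<forall>v\<in>set V1. in_first_run v" and second: "\<forall>v\<in>set V2. \<not> in_first_run v"
  shows "\<rho> \<preceq> b"
proof -
  define V where "V = V1 @ V2"
  define P where "P = map position_of V"
  have pos: "position_of v < n" "b!(position_of v) = v" if "v \<in> set V" for v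
    using position_of vals that unfolding V_def by auto
  have same_run_mono: "position_of v < position_of w"
    if "v \<in> set V" "w \<in> set V" "v < w" "in_first_run v \<longleftrightarrow> in_first_run w" for v w
    using run_order[OF pos(1) pos(1)] pos that unfolding in_first_run_def by metis
  have "sorted_wrt (<) P"
    unfolding P_def V_def map_append sorted_wrt_append sorted_wrt_map
  proof (intro conjI ballI)
    show "sorted_wrt (\<lambda>v w. position_of v < position_of w) V1"
      using sorted(1) first same_run_mono unfolding V_def
      by (auto intro: sorted_wrt_mono_rel[of _ "(<)"])
    show "sorted_wrt (\<lambda>v w. position_of v < position_of w) V2"
      using sorted(2) second same_run_mono unfolding V_def
      by (auto intro: sorted_wrt_mono_rel[of _ "(<)"])
    fix p q assume "p \<in> set (map position_of V1)" "q \<in> set (map position_of V2)"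
    then have "p < k" "k \<le> q" using first second unfolding in_first_run_def by auto
    then show "p < q" by simp
  qed
  moreover have "length P = length \<rho>" using iso unfolding P_def V_def order_iso_def by simp
  moreover have "\<forall>i<length P. P!i < n \<and> b!(P!i) = V!i" unfolding P_def using pos by simp
  ultimately have "embedding \<rho> b (nth P)"
    using iso unfolding embedding_def order_iso_def V_def by (auto simp: sorted_wrt_iff_nth_less)
  then show ?thesis using contains_iff_embedding by blast
qed

text \<open>The values
  \<open>s+1\<close> and \<open>s+2\<close> lie in the second run; according to whether \<open>s+3\<close> does, they extend with
  three (resp. two) later first-run values to an occurrence of \<open>456123\<close> (resp. \<open>356124\<close>).\<close>
lemma second_run_majority_pattern:
  assumes majority: "\<And>e. s < e \<Longrightarrow> e < t \<Longrightarrow>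
             count_in in_first_run s e < count_in (\<lambda>v. \<not> in_first_run v) s e"
    and three: "3 \<le> count_in in_first_run s t" and st: "s + 6 \<le> t" "t \<le> n"
  shows "[4,5,6,1,2,3] \<preceq> b \<or> [3,5,6,1,2,4] \<preceq> b"
proof -
  have s1: "\<not> in_first_run (Suc s)"
    using majority[of "Suc s"] st by (auto simp: count_in_Suc split: if_splits)
  have s2: "\<not> in_first_run (s + 2)"
    using majority[of "s + 2"] st s1 by (auto simp: count_in_Suc split: if_splits)
  show ?thesis
  proof (cases "in_first_run (s + 3)")
    case False
    have "count_in in_first_run s (s + 3) = 0" using s1 s2 False by (simp add: count_in_Suc eval_nat_numeral)
    then have "3 \<le> count_in in_first_run (s + 3) t" using three count_in_split[of s "s + 3" t] st by simp
    then obtain ws where ws: "length ws = 3" "sorted_wrt (<) ws"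
        "\<forall>w\<in>set ws. s + 3 < w \<and> w \<le> t \<and> in_first_run w"
      using count_in_elements by blast
    then obtain w1 w2 w3 where "ws = [w1, w2, w3]" by (auto simp: numeral_3_eq_3 length_Suc_conv)
    then have w: "s + 3 < w1" "w1 < w2" "w2 < w3" "w3 \<le> t"
        "in_first_run w1" "in_first_run w2" "in_first_run w3"
      using ws by auto
    have "order_iso [4,5,6,1,2,3] ([w1, w2, w3] @ [Suc s, s + 2, s + 3])"
      using w unfolding order_iso_def by (simp add: All_less_Suc numeral_eq_Suc)
    then have "[4,5,6,1,2,3] \<preceq> b"
      by (rule pattern_from_runs) (use w s1 s2 False st in auto)
    then show ?thesis ..
  next
    case True
    have s4: "\<not> in_first_run (s + 4)"
      using majority[of "s + 4"] st s1 s2 True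
      by (auto simp: count_in_Suc eval_nat_numeral split: if_splits)
    have "count_in in_first_run s (s + 4) = 1" using s1 s2 True s4 by (simp add: count_in_Suc eval_nat_numeral)
    then have "2 \<le> count_in in_first_run (s + 4) t" using three count_in_split[of s "s + 4" t] st by simp
    then obtain ws where ws: "length ws = 2" "sorted_wrt (<) ws"
        "\<forall>w\<in>set ws. s + 4 < w \<and> w \<le> t \<and> in_first_run w"
      using count_in_elements by blast
    then obtain w1 w2 where "ws = [w1, w2]" by (auto simp: numeral_2_eq_2 length_Suc_conv)
    then have w: "s + 4 < w1" "w1 < w2" "w2 \<le> t" "in_first_run w1" "in_first_run w2"
      using ws by auto
    have "order_iso [3,5,6,1,2,4] ([s + 3, w1, w2] @ [Suc s, s + 2, s + 4])"
      using w unfolding order_iso_def by (simp add: All_less_Suc numeral_eq_Suc)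
    then have "[3,5,6,1,2,4] \<preceq> b"
      by (rule pattern_from_runs) (use w s1 s2 s4 True st in auto)
    then show ?thesis ..
  qed
qed

end

section \<open>Increasing patterns\<close>

text \<open>If \<open>a\<close> has no descent, its occurrences in \<open>b\<close> are exactly the increasing sets of
  \<open>m\<close> positions, and the exchange argument is replaced by an analysis of the cuts of \<open>b\<close>.
  This is the only place where the two forbidden patterns are used.\<close>
locale increasing_pattern = two_run_interval +
  assumes no_descent: "descents a = {}"
    and avoids_456123: "\<not> [4,5,6,1,2,3] \<preceq> b"
    and avoids_356124: "\<not> [3,5,6,1,2,4] \<preceq> b"
begin

lemma a_increasing: "i < j \<Longrightarrow> j < m \<Longrightarrow> a!i < a!j"
proof (rule ccontr)
  assume ij: "i < j" "j < m" and "\<not> a!i < a!j"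
  moreover have "a!i \<noteq> a!j" using perm_a ij by (simp add: is_perm_def nth_eq_iff_index_eq)
  ultimately obtain r where "i \<le> r" "r < j" "a!r > a!(Suc r)"
    using descent_between by (metis linorder_neqE_nat)
  then have "r \<in> descents a" using ij unfolding descents_def by auto
  then show False using no_descent by simp
qed

lemma a_less_iff: "i < m \<Longrightarrow> j < m \<Longrightarrow> a!i < a!j \<longleftrightarrow> i < j"
  using a_increasing by (metis less_asym linorder_neqE_nat)

lemma used_increasing: "embedding a b g \<Longrightarrow> increasing_set (used g)"
  unfolding increasing_set_def
proof (intro conjI ballI impI)
  assume g: "embedding a b g"
  then show "used g \<subseteq> {..<n}" using used_subset by blast
  fix p q assume "p \<in> used g" "q \<in> used g" "p < q"
  then obtain i j where ij: "i < m" "j < m" "p = g i" "q = g j" unfolding used_def by auto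
  then have "\<not> j \<le> i" using g \<open>p < q\<close> unfolding embedding_def by (metis le_less less_asym)
  then have "a!i < a!j" using a_less_iff ij by simp
  then show "b!p < b!q" using g ij unfolding embedding_def by auto
qed

lemma increasing_set_embedding:
  assumes incr: "increasing_set E" and card: "card E = m"
  shows "\<exists>g. embedding a b g \<and> used g = E"
proof -
  have E: "E \<subseteq> {..<n}" "finite E" using incr unfolding increasing_set_def by (auto intro: finite_subset)
  define L where "L = sorted_list_of_set E"
  have L: "sorted_wrt (<) L" "length L = m" "set L = E"
    unfolding L_def using E card by auto
  have L_mono: "L!i < L!j" if "i < j" "j < m" for i j
    using L that by (simp add: sorted_wrt_iff_nth_less)
  have L_in: "L!i \<in> E" if "i < m" for i using L that nth_mem by metis
  have "embedding a b (nth L)" unfolding embedding_def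
  proof (intro conjI allI impI)
    fix i j assume "i < m" "j < m"
    moreover have "i < j \<Longrightarrow> b!(L!i) < b!(L!j)" if "j < m" for i j
      using incr L_in L_mono that unfolding increasing_set_def by (meson less_trans)
    ultimately show "(a!i < a!j) = (b!(L!i) < b!(L!j))"
      using a_less_iff by (metis less_asym linorder_neqE_nat)
  qed (use L_mono L_in E in auto)
  moreover have "used (nth L) = E" unfolding used_def using L by (auto simp: set_conv_nth)
  ultimately show ?thesis by blast
qed

lemma gap_rel_outside:
  assumes "increasing_set E" "card E = m" "i < n" "j < n" "i \<notin> E" "j \<notin> E"
  shows "(i,j) \<in> gap_rel"
  using increasing_set_embedding[OF assms(1,2)] gap_relI assms by metis

lemma card_complement: "E \<subseteq> {..<n} \<Longrightarrow> card ({..<n} - E) = n - card E"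
  by (simp add: card_Diff_subset finite_subset)

text \<open>Positions inside a cut of size \<open>n - m\<close> are gap-related: its complement is an
  increasing set of size \<open>m\<close>.\<close>
lemma gap_rel_in_cut:
  assumes "card (cut e) = n - m" "p \<in> cut e" "q \<in> cut e"
  shows "(p,q) \<in> gap_rel"
proof -
  define E where "E = {..<n} - cut e"
  have "card E = m" unfolding E_def using card_complement[OF cut_subset] assms rank3 by simp
  moreover have "increasing_set E" unfolding E_def by (rule increasing_if_disjoint_cut) auto
  ultimately show ?thesis using gap_rel_outside assms cut_subset unfolding E_def by blast
qed

text \<open>If some cut has fewer than \<open>n - m\<close> elements, an occurrence \<open>E0\<close> avoiding it has a gap
  \<open>y\<close> outside the cut; every position is related to some gap of \<open>E0\<close> (directly, or after
  exchanging it for \<open>y\<close>), and the gaps of \<open>E0\<close> are pairwise related.\<close>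
lemma connected_if_small_cut:
  assumes small: "card (cut t) < n - m" and pq: "p < n" "q < n"
  shows "(p,q) \<in> gap_rel\<^sup>*"
proof -
  have "m \<le> card ({..<n} - cut t)" using card_complement[OF cut_subset] small by simp
  then obtain E0 where E0: "E0 \<subseteq> {..<n} - cut t" "card E0 = m"
    by (meson obtain_subset_with_card_n)
  have E0_sub: "E0 \<subseteq> {..<n}" and fin: "finite E0" using E0 by (auto intro: finite_subset)
  have incr: "increasing_set E0" using E0 by (intro increasing_if_disjoint_cut) auto
  define F0 where "F0 = {..<n} - E0"
  have card_F0: "card F0 = n - m" unfolding F0_def using card_complement E0_sub E0 by simp
  have "\<not> F0 \<subseteq> cut t"
  proof
    assume "F0 \<subseteq> cut t"
    then have "card F0 \<le> card (cut t)" by (intro card_mono) (auto intro: finite_subset[OF cut_subset])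
    then show False using card_F0 small by simp
  qed
  then obtain y where y: "y \<in> F0" "y \<notin> cut t" by auto
  have to_gap: "\<exists>z\<in>F0. (z,p) \<in> gap_rel" if p: "p < n" for p
  proof (cases "p \<in> E0")
    case False
    then have "p \<in> F0" "(p,p) \<in> gap_rel"
      using gap_rel_outside[OF incr E0(2) p p False False] p unfolding F0_def by auto
    then show ?thesis by blast
  next
    case True
    define E' where "E' = insert y (E0 - {p})"
    have y': "y \<notin> E0" "y < n" using y F0_def by auto
    have "0 < m" using True fin E0(2) by (metis card_gt_0_iff empty_iff)
    then have card_E': "card E' = m"
      unfolding E'_def using True y' fin E0(2) by (simp add: card_insert_disjoint card_Diff_singleton)
    have "E' \<subseteq> {..<n}" "E' \<inter> cut t = {}" using E0 y y' unfolding E'_def by auto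
    then have incr': "increasing_set E'" by (rule increasing_if_disjoint_cut)
    have "card (F0 - {y}) > 0" using card_F0 rank3 y by (simp add: card_Diff_singleton)
    then obtain z where "z \<in> F0 - {y}" by (metis card_gt_0_iff ex_in_conv)
    then have z: "z \<in> F0" "z \<notin> E'" "p \<notin> E'" "z < n" using F0_def E'_def True y' by auto
    then have "(z,p) \<in> gap_rel" using gap_rel_outside[OF incr' card_E' z(4) p z(2,3)] by simp
    then show ?thesis using z(1) by blast
  qed
  obtain zp zq where z: "zp \<in> F0" "(zp,p) \<in> gap_rel" "zq \<in> F0" "(zq,q) \<in> gap_rel"
    using to_gap pq by blast
  then have "(zp,zq) \<in> gap_rel" unfolding F0_def by (intro gap_rel_outside[OF incr E0(2)]) auto
  moreover have "(p,zp) \<in> gap_rel" using z gap_rel_sym by (meson symD)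
  ultimately show ?thesis using z by (meson rtrancl.rtrancl_into_rtrancl r_into_rtrancl)
qed

end

text \<open>If no cut is smaller than \<open>n - m\<close>, the gaps of every occurrence form a cut, and
  consecutive such cuts are bridged by a third one.\<close>
locale large_cuts = increasing_pattern +
  assumes large: "\<And>e. n - m \<le> card (cut e)"
begin

lemma gaps_form_cut:
  assumes g: "embedding a b g"
  shows "\<exists>t\<le>n. card (cut t) = n - m \<and> cut t = {..<n} - used g"
proof -
  obtain t where t: "t \<le> n" "used g \<inter> cut t = {}"
    using increasing_set_misses_cut used_increasing g by blast
  define F where "F = {..<n} - used g"
  have card_F: "card F = n - m" unfolding F_def using card_complement used_subset card_used g by simp
  have sub: "cut t \<subseteq> F" unfolding F_def using t cut_subset by auto
  then have "card (cut t) \<le> card F" by (intro card_mono) (auto simp: F_def)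
  then have "card (cut t) = card F" using large[of t] card_F by simp
  then have "cut t = F" using sub by (intro card_subset_eq) (auto simp: F_def)
  then show ?thesis using t card_F F_def by auto
qed

text \<open>Between the thresholds there are \<open>d = n - m\<close> values in each
  run, and no intermediate cut is smaller than \<open>d\<close>.  If the two counts balance at some
  intermediate threshold, its cut is the bridge; otherwise the second run is strictly
  ahead throughout, which forces a forbidden pattern.\<close>
lemma bridging_cut:
  assumes t: "t1 < t2" "t2 \<le> n" and c1: "card (cut t1) = n - m" and c2: "card (cut t2) = n - m"
    and disjoint: "cut t1 \<inter> cut t2 = {}"
  shows "\<exists>e. card (cut e) = n - m \<and> cut t1 \<inter> cut e \<noteq> {} \<and> cut e \<inter> cut t2 \<noteq> {}"
proof -
  define d where "d = n - m"
  let ?F = "count_in in_first_run" and ?S = "count_in (\<lambda>v. \<not> in_first_run v)"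
  have card_e: "card (cut e) = ?S t1 e + ?F e t2" if "t1 \<le> e" "e \<le> t2" for e
    using card_cut_between[OF disjoint that t(2)] .
  have F_split: "?F t1 t2 = ?F t1 e + ?F e t2" if "t1 \<le> e" "e \<le> t2" for e
    using count_in_split that by blast
  have F: "?F t1 t2 = d" using card_e[of t1] c1 t d_def by simp
  have S: "?S t1 t2 = d" using card_e[of t2] c2 t d_def by simp
  have width: "t2 - t1 = 2 * d" using count_in_compl[of t1 t2 in_first_run] F S t by simp
  have balance: "?F t1 e \<le> ?S t1 e" if "t1 \<le> e" "e \<le> t2" for e
    using large[of e] card_e[OF that] F_split[OF that] F d_def by simp
  show ?thesis
  proof (cases "\<exists>e. t1 < e \<and> e < t2 \<and> ?F t1 e = ?S t1 e")
    case True
    then obtain e where e: "t1 < e" "e < t2" "?F t1 e = ?S t1 e" by blast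
    have sum: "?F t1 e + ?S t1 e = e - t1" using count_in_compl[of t1 e in_first_run] e by linarith
    have "card (cut e) = d" using card_e[of e] F_split[of e] e F by simp
    moreover have "0 < ?F e t2" using F_split[of e] e F sum width by simp
    then obtain v where v: "e < v" "v \<le> t2" "in_first_run v" using count_in_pos by blast
    then have "position_of v \<in> cut t1 \<inter> cut e"
      using position_of_in_cut e t unfolding cut_values_def by auto
    moreover have "0 < ?S t1 e" using sum e by simp
    then obtain w where w: "t1 < w" "w \<le> e" "\<not> in_first_run w" using count_in_pos by blast
    then have "position_of w \<in> cut e \<inter> cut t2"
      using position_of_in_cut e t unfolding cut_values_def by auto
    ultimately show ?thesis unfolding d_def by blast
  next
    case False
    then have "\<And>e. t1 < e \<Longrightarrow> e < t2 \<Longrightarrow> ?F t1 e < ?S t1 e"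
      using balance by (metis le_neq_implies_less less_imp_le)
    moreover have "3 \<le> ?F t1 t2" "t1 + 6 \<le> t2" using F width t rank3 unfolding d_def by auto
    ultimately have "[4,5,6,1,2,3] \<preceq> b \<or> [3,5,6,1,2,4] \<preceq> b"
      using second_run_majority_pattern t(2) by blast
    then show ?thesis using avoids_456123 avoids_356124 by blast
  qed
qed

lemma cuts_connected:
  assumes "t1 \<le> n" "t2 \<le> n" "card (cut t1) = n - m" "card (cut t2) = n - m"
    and "p \<in> cut t1" "q \<in> cut t2"
  shows "(p,q) \<in> gap_rel\<^sup>*"
proof -
  have ordered: "(p,q) \<in> gap_rel\<^sup>*"
    if t: "t1 < t2" "t2 \<le> n" and c: "card (cut t1) = n - m" "card (cut t2) = n - m"
      and pq: "p \<in> cut t1" "q \<in> cut t2" for t1 t2 p q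
  proof (cases "cut t1 \<inter> cut t2 = {}")
    case False
    then obtain z where "z \<in> cut t1" "z \<in> cut t2" by blast
    then have "(p,z) \<in> gap_rel" "(z,q) \<in> gap_rel" using gap_rel_in_cut c pq by auto
    then show ?thesis by auto
  next
    case True
    obtain e where e: "card (cut e) = n - m" "cut t1 \<inter> cut e \<noteq> {}" "cut e \<inter> cut t2 \<noteq> {}"
      using bridging_cut[OF t c True] by blast
    then obtain z1 z2 where z: "z1 \<in> cut t1" "z1 \<in> cut e" "z2 \<in> cut e" "z2 \<in> cut t2" by blast
    then have "(p,z1) \<in> gap_rel" "(z1,z2) \<in> gap_rel" "(z2,q) \<in> gap_rel"
      using gap_rel_in_cut c e(1) pq by auto
    then show ?thesis by (meson rtrancl.rtrancl_into_rtrancl r_into_rtrancl)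
  qed
  show ?thesis
  proof (cases t1 t2 rule: linorder_cases)
    case less
    then show ?thesis using ordered assms by blast
  next
    case equal
    then show ?thesis using gap_rel_in_cut assms by blast
  next
    case greater
    then show ?thesis using ordered[of t2 t1 q p] assms gap_rel_rtrancl_sym by blast
  qed
qed

lemma all_linked: "embedding a b g \<Longrightarrow> embedding a b g' \<Longrightarrow> linked g g'"
  unfolding linked_def using gaps_form_cut cuts_connected by (metis Diff_iff lessThan_iff)

end

context increasing_pattern
begin

lemma increasing_all_linked:
  assumes "embedding a b g" "embedding a b g'"
  shows "linked g g'"
proof (cases "\<exists>t. card (cut t) < n - m")
  case True
  then show ?thesis unfolding linked_def using connected_if_small_cut by blast
next
  case False
  then have "large_cuts a b k"
    unfolding large_cuts_def large_cuts_axioms_def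
    using increasing_pattern_axioms by (simp add: not_less)
  then show ?thesis using large_cuts.all_linked assms by blast
qed

end

context two_run_interval
begin

theorem all_linked_if_avoiding:
  assumes "\<not> [4,5,6,1,2,3] \<preceq> b" "\<not> [3,5,6,1,2,4] \<preceq> b"
    and "embedding a b g" "embedding a b g'"
  shows "linked g g'"
proof (cases "descents a = {}")
  case True
  then have "increasing_pattern a b k"
    unfolding increasing_pattern_def increasing_pattern_axioms_def
    using two_run_interval_axioms assms by blast
  then show ?thesis using increasing_pattern.increasing_all_linked assms by blast
next
  case False
  then show ?thesis using linked_if_descent assms by blast
qed

end

theorem mainTheorem14:
  fixes pi :: "nat list"
  assumes "is_perm pi"
    and "card (descents pi) = 1"
    and "avoids pi [4,5,6,1,2,3]"
    and "avoids pi [3,5,6,1,2,4]"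
  shows "\<forall>a b. a \<in> perm_interval [1] pi \<and> b \<in> perm_interval [1] pi \<and> a \<preceq> b
           \<and> length b \<ge> length a + 3 \<longrightarrow> poset_connected (open_interval a b)"
proof (intro allI impI)
  fix a b
  assume "a \<in> perm_interval [1] pi \<and> b \<in> perm_interval [1] pi \<and> a \<preceq> b \<and> length b \<ge> length a + 3"
  then have perms: "is_perm a" "is_perm b" and b_pi: "b \<preceq> pi" and rank: "length a + 3 \<le> length b"
    unfolding perm_interval_def by auto
  have "\<And>r r'. r \<in> descents b \<Longrightarrow> r' \<in> descents b \<Longrightarrow> r = r'"
    using pattern_descent_unique[OF b_pi assms(2)] by blast
  then obtain k where "\<forall>p q. p < q \<longrightarrow> q < length b \<longrightarrow> (q < k \<or> k \<le> p) \<longrightarrow> b!p < b!q"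
    using two_runs perms(2) unfolding is_perm_def by blast
  then interpret two_run_interval a b k
    using perms rank by unfold_locales auto
  have "\<not> [4,5,6,1,2,3] \<preceq> b" "\<not> [3,5,6,1,2,4] \<preceq> b"
    using assms(3,4) b_pi contains_trans unfolding avoids_def by blast+
  then show "poset_connected (open_interval a b)"
    using connected_if_all_linked all_linked_if_avoiding by blast
qed

end
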